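(* Let $\mathcal{L}_1,\mathcal{L}_2$ be objects of $\mathbf{Cal^0_{Sym}}$ and write $1_\circledast:=\Sigma_1\times\Sigma_2$. There is a bijection $$\xi:\Sigma'_\circledast\cup\{1_\circledast\}\to\mathbf{Cal^0_{Sym}}(\mathcal{L}_1,\mathcal{L}_2^{\mathrm{op}})$$ such that for every $x\in\Sigma'_\circledast\cup\{1_\circledast\}$, $$x=\bigcup\{\{p\}\times\Sigma[\xi(x)(p)]\,;\,p\in\Sigma_1\},$$ where $\xi(x)(p)\in\mathcal{L}_2^{\mathrm{op}}$ is regarded as an element of $\mathcal{L}_2$ and $\Sigma[\cdot]$ denotes the set of atoms of $\mathcal{L}_2$ below it.
   Context: For a complete lattice $\mathcal{L}_i$: $\Sigma_i,\Sigma_i'$ are its atoms and coatoms, $\Sigma[a]$ (resp. $\Sigma'[a]$) the atoms below (resp. coatoms above) $a$, $\mathsf{Cl}(\omega)=\{\Sigma[a];a\in\omega\}$, $\mathcal{L}^{\mathrm{op}}$ the dual lattice. For a map $f:\mathcal{L}_1\to\mathcal{L}_2$ between complete lattices, $f^\circ(b):=\bigvee\{a\in\mathcal{L}_1; f(a)\le b\}$. $\mathbf{Cal^0_{Sym}}$: objects are complete atomistic coatomistic lattices with $\Sigma[x]\cup\Sigma[y]\ne\Sigma$ for all coatoms $x,y$ and $\Sigma'[p]\cup\Sigma'[q]\ne\Sigma'$ for all atoms $p,q$; arrows $\mathcal{L}\to\mathcal{M}$ are maps $f$ preserving arbitrary joins, sending atoms to atoms or $0$, and such that $f^\circ$ sends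 coatoms to coatoms or $1$. For $R\subseteq\Sigma_1\times\Sigma_2$, $p=(p_1,p_2)$: $R_1[p]:=\{q_1;(q_1,p_2)\in R\}$, $R_2[p]:=\{q_2;(p_1,q_2)\in R\}$. $\Sigma'_\circledast:=\{R\subsetneqq\Sigma_1\times\Sigma_2\,;\,R_1[p]\in\mathsf{Cl}(\Sigma_1'\cup\{1\}),\ R_2[p]\in\mathsf{Cl}(\Sigma_2'\cup\{1\})\ \forall p\}$; $\mathcal{L}_1\circledast\mathcal{L}_2:=\{\bigcap\omega;\omega\subseteq\Sigma'_\circledast\cup\{\Sigma_1\times\Sigma_2\}\}$ ordered by inclusion. *)

theory Defs
  imports Main "HOL-Library.Dual_Ordered_Lattice"
begin

text \<open>Complete lattices are modelled by types of class complete_lattice;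
  the dual lattice L^op is the type 'a dual (HOL-Library.Dual_Ordered_Lattice).\<close>

definition atoms :: "'a::complete_lattice set" where
  "atoms = {a. a \<noteq> bot \<and> (\<forall>b. b \<le> a \<longrightarrow> b = bot \<or> b = a)}"

definition coatoms :: "'a::complete_lattice set" where
  "coatoms = {a. a \<noteq> top \<and> (\<forall>b. a \<le> b \<longrightarrow> b = top \<or> b = a)}"

definition atoms_below :: "'a::complete_lattice \<Rightarrow> 'a set" where
  "atoms_below a = {p \<in> atoms. p \<le> a}"

definition coatoms_above :: "'a::complete_lattice \<Rightarrow> 'a set" where
  "coatoms_above a = {x \<in> coatoms. a \<le> x}"

definition Cl :: "'a::complete_lattice set \<Rightarrow> 'a set set" where
  "Cl \<omega> = atoms_below ` \<omega>"

definition atomistic :: "'a::complete_lattice itself \<Rightarrow> bool" where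
  "atomistic _ \<longleftrightarrow> (\<forall>a::'a. a = Sup (atoms_below a))"

definition coatomistic :: "'a::complete_lattice itself \<Rightarrow> bool" where
  "coatomistic _ \<longleftrightarrow> (\<forall>a::'a. a = Inf (coatoms_above a))"

definition cal0sym_obj :: "'a::complete_lattice itself \<Rightarrow> bool" where
  "cal0sym_obj T \<longleftrightarrow> atomistic T \<and> coatomistic T
     \<and> (\<forall>x\<in>(coatoms::'a set). \<forall>y\<in>coatoms. atoms_below x \<union> atoms_below y \<noteq> atoms)
     \<and> (\<forall>p\<in>(atoms::'a set). \<forall>q\<in>atoms. coatoms_above p \<union> coatoms_above q \<noteq> coatoms)"

definition radj :: "('a::complete_lattice \<Rightarrow> 'b::complete_lattice) \<Rightarrow> 'b \<Rightarrow> 'a" where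
  "radj f b = Sup {a. f a \<le> b}"

definition cal0sym_arrow :: "('a::complete_lattice \<Rightarrow> 'b::complete_lattice) \<Rightarrow> bool" where
  "cal0sym_arrow f \<longleftrightarrow>
     (\<forall>S. f (Sup S) = Sup (f ` S))
     \<and> (\<forall>a\<in>atoms. f a \<in> atoms \<or> f a = bot)
     \<and> (\<forall>x\<in>coatoms. radj f x \<in> coatoms \<or> radj f x = top)"

definition cal0sym_hom :: "('a::complete_lattice \<Rightarrow> 'b::complete_lattice) set" where
  "cal0sym_hom = {f. cal0sym_arrow f}"

definition rel1 :: "('a \<times> 'b) set \<Rightarrow> 'a \<times> 'b \<Rightarrow> 'a set" where
  "rel1 R p = {q1. (q1, snd p) \<in> R}"

definition rel2 :: "('a \<times> 'b) set \<Rightarrow> 'a \<times> 'b \<Rightarrow> 'b set" where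
  "rel2 R p = {q2. (fst p, q2) \<in> R}"

definition coatoms_tensor :: "('a::complete_lattice \<times> 'b::complete_lattice) set set" where
  "coatoms_tensor = {R. R \<subset> atoms \<times> atoms \<and>
      (\<forall>p \<in> atoms \<times> atoms. rel1 R p \<in> Cl (coatoms \<union> {top})
                          \<and> rel2 R p \<in> Cl (coatoms \<union> {top}))}"

end

theory Submission
  imports Defs
begin

text \<open>A relation R between atoms whose rows and columns are all of the form Sigma[c] with c a
  coatom or top is determined by its rows Sigma[g p], and p \<mapsto> g p extends to
  a \<mapsto> Inf {g p; p atom below a}, a map L1 \<rightarrow> L2^op. Because the columns are closed as well,
  this map has an upper adjoint, namely the same construction applied to the converse relation;
  hence it preserves joins, and its upper adjoint sends the coatom q of L2^op to the join of the
  column of q, a coatom or top. Conversely an arrow f yields the relation {(p, q). q \<le> f p},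
  whose rows are Sigma[f p] and whose columns are Sigma[radj f q].\<close>

lemma dual_mem_atoms_iff [simp]:
  "dual x \<in> atoms \<longleftrightarrow> (x::'a::complete_lattice) \<in> coatoms"
proof -
  have "(\<forall>b::'a dual. P b) \<longleftrightarrow> (\<forall>y. P (dual y))" for P by (metis dual_undual)
  then show ?thesis unfolding atoms_def coatoms_def by (simp flip: dual_top_eq)
qed

lemma dual_mem_coatoms_iff [simp]:
  "dual x \<in> coatoms \<longleftrightarrow> (x::'a::complete_lattice) \<in> atoms"
proof -
  have "(\<forall>b::'a dual. P b) \<longleftrightarrow> (\<forall>y. P (dual y))" for P by (metis dual_undual)
  then show ?thesis unfolding atoms_def coatoms_def by (simp flip: dual_bot_eq)
qed

lemma undual_mem_coatoms_top_iff:
  "undual d \<in> coatoms \<union> {top} \<longleftrightarrow> (d::'a::complete_lattice dual) \<in> atoms \<union> {bot}"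
proof -
  obtain x where "d = dual x" by (metis dual_undual)
  then show ?thesis by (simp flip: dual_top_eq)
qed

lemma atoms_below_atom: "(p::'a::complete_lattice) \<in> atoms \<Longrightarrow> atoms_below p = {p}"
  unfolding atoms_below_def atoms_def by auto

lemma atoms_below_top: "atoms_below (top::'a::complete_lattice) = atoms"
  unfolding atoms_below_def by auto

lemma Sup_atoms_below:
  "atomistic TYPE('a::complete_lattice) \<Longrightarrow> Sup (atoms_below (a::'a)) = a"
  unfolding atomistic_def by metis

lemma atomistic_le_iff:
  assumes "atomistic TYPE('a::complete_lattice)"
  shows "(a::'a) \<le> b \<longleftrightarrow> (\<forall>p\<in>atoms_below a. p \<le> b)"
proof
  assume "\<forall>p\<in>atoms_below a. p \<le> b"
  then have "Sup (atoms_below a) \<le> b" by (simp add: Sup_least)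
  then show "a \<le> b" using Sup_atoms_below[OF assms] by simp
qed (auto simp: atoms_below_def)

lemma atoms_mem_Cl: "top \<in> X \<Longrightarrow> (atoms::'a::complete_lattice set) \<in> Cl X"
  unfolding Cl_def using atoms_below_top by blast

lemma mem_ClD:
  assumes "atomistic TYPE('a::complete_lattice)" and "(S::'a set) \<in> Cl X"
  shows "S = atoms_below (Sup S) \<and> Sup S \<in> X"
  using assms(2) Sup_atoms_below[OF assms(1)] unfolding Cl_def by auto

lemma Sup_preserving_mono:
  assumes "\<forall>S. f (Sup S) = Sup (f ` S)" and "(a::'a::complete_lattice) \<le> b"
  shows "f a \<le> (f b :: 'b::complete_lattice)"
proof -
  have "f b = Sup {f a, f b}"
    using assms by (metis image_empty image_insert sup.absorb2 Sup_insert Sup_empty sup_bot_right)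
  then show ?thesis by (metis Sup_upper insertI1)
qed

lemma Sup_preserving_le_radj_iff:
  assumes "\<forall>S. f (Sup S) = Sup (f ` S)"
  shows "f (a::'a::complete_lattice) \<le> (y::'b::complete_lattice) \<longleftrightarrow> a \<le> radj f y"
proof
  assume "f a \<le> y"
  then show "a \<le> radj f y" unfolding radj_def by (simp add: Sup_upper)
next
  assume "a \<le> radj f y"
  then have "f a \<le> f (radj f y)" using Sup_preserving_mono[OF assms] by blast
  also have "f (radj f y) = Sup (f ` {a. f a \<le> y})" unfolding radj_def using assms by blast
  also have "\<dots> \<le> y" by (rule Sup_least) blast
  finally show "f a \<le> y" .
qed

lemma galois_Sup_preserving:
  assumes "\<And>a y. f (a::'a::complete_lattice) \<le> (y::'b::complete_lattice) \<longleftrightarrow> a \<le> g y"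
  shows "f (Sup S) = Sup (f ` S)"
proof (rule order.antisym)
  show "f (Sup S) \<le> Sup (f ` S)"
    unfolding assms by (rule Sup_least) (simp flip: assms add: SUP_upper)
  have "Sup S \<le> g (f (Sup S))" using assms by blast
  then have "s \<le> g (f (Sup S))" if "s \<in> S" for s
    using that Sup_upper order_trans by blast
  then show "Sup (f ` S) \<le> f (Sup S)"
    by (simp add: assms SUP_least)
qed

lemma galois_radj_eq:
  assumes "\<And>a y. f (a::'a::complete_lattice) \<le> (y::'b::complete_lattice) \<longleftrightarrow> a \<le> g y"
  shows "radj f = g"
  unfolding radj_def assms by (simp add: fun_eq_iff flip: atMost_def)

definition bicoatomic_rel :: "('a::complete_lattice \<times> 'b::complete_lattice) set \<Rightarrow> bool" where
  "bicoatomic_rel R \<longleftrightarrow> R \<subseteq> atoms \<times> atoms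
     \<and> (\<forall>p\<in>atoms. R `` {p} \<in> Cl (coatoms \<union> {top}))
     \<and> (\<forall>q\<in>atoms. R\<inverse> `` {q} \<in> Cl (coatoms \<union> {top}))"

lemma bicoatomic_rel_converse [simp]: "bicoatomic_rel (R\<inverse>) \<longleftrightarrow> bicoatomic_rel R"
  unfolding bicoatomic_rel_def by auto

lemma coatoms_tensor_Un_top_eq:
  assumes "atomistic TYPE('a::complete_lattice)" and "atomistic TYPE('b::complete_lattice)"
  shows "coatoms_tensor \<union> {atoms \<times> atoms} = (Collect bicoatomic_rel :: ('a \<times> 'b) set set)"
proof -
  have atoms_mem: "(atoms::'a set) \<in> Cl (coatoms \<union> {top})"
    "(atoms::'b set) \<in> Cl (coatoms \<union> {top})"
    by (simp_all add: atoms_mem_Cl)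
  have rows_cols:
    "(\<forall>p\<in>atoms \<times> atoms. rel1 R p \<in> Cl (coatoms \<union> {top}) \<and> rel2 R p \<in> Cl (coatoms \<union> {top}))
     \<longleftrightarrow> (\<forall>p\<in>atoms. R `` {p} \<in> Cl (coatoms \<union> {top}))
       \<and> (\<forall>q\<in>atoms. R\<inverse> `` {q} \<in> Cl (coatoms \<union> {top}))"
    if "R \<subseteq> atoms \<times> atoms" for R :: "('a \<times> 'b) set"
  proof (cases "(atoms::'a set) = {} \<or> (atoms::'b set) = {}")
    case True
    with that have "R = {}" by auto
    with True show ?thesis using atoms_mem by auto
  next
    case False
    then show ?thesis unfolding rel1_def rel2_def by (auto simp: Image_singleton)
  qed
  have "bicoatomic_rel (atoms \<times> atoms :: ('a \<times> 'b) set)"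
    unfolding bicoatomic_rel_def using atoms_mem by (auto simp: Image_singleton)
  then show ?thesis
    unfolding coatoms_tensor_def bicoatomic_rel_def using rows_cols by blast
qed

lemma bicoatomic_rel_row:
  assumes "atomistic TYPE('b::complete_lattice)"
    and "bicoatomic_rel (R :: ('a::complete_lattice \<times> 'b) set)"
    and "p \<in> atoms"
  shows "R `` {p} = atoms_below (Sup (R `` {p})) \<and> Sup (R `` {p}) \<in> coatoms \<union> {top}"
  using assms mem_ClD unfolding bicoatomic_rel_def by blast

lemma bicoatomic_rel_mem_iff:
  assumes "atomistic TYPE('b::complete_lattice)"
    and "bicoatomic_rel (R :: ('a::complete_lattice \<times> 'b) set)"
    and "p \<in> atoms" and "q \<in> atoms"
  shows "(p, q) \<in> R \<longleftrightarrow> q \<le> Sup (R `` {p})"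
  using bicoatomic_rel_row[OF assms(1-3)] assms(4) unfolding atoms_below_def by blast

definition arrow_of_rel ::
  "('a::complete_lattice \<times> 'b::complete_lattice) set \<Rightarrow> 'a \<Rightarrow> 'b dual" where
  "arrow_of_rel R a = dual (INF p\<in>atoms_below a. Sup (R `` {p}))"

definition rel_of_arrow ::
  "('a::complete_lattice \<Rightarrow> 'b::complete_lattice dual) \<Rightarrow> ('a \<times> 'b) set" where
  "rel_of_arrow f = (\<Union>p\<in>atoms. {p} \<times> atoms_below (undual (f p)))"

lemma arrow_of_rel_atom: "p \<in> atoms \<Longrightarrow> undual (arrow_of_rel R p) = Sup (R `` {p})"
  unfolding arrow_of_rel_def by (simp add: atoms_below_atom image_image)

lemma le_arrow_of_rel_iff:
  assumes "atomistic TYPE('b::complete_lattice)"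
    and "bicoatomic_rel (R :: ('a::complete_lattice \<times> 'b) set)"
  shows "y \<le> undual (arrow_of_rel R a)
           \<longleftrightarrow> (\<forall>p\<in>atoms_below a. \<forall>q\<in>atoms_below y. (p, q) \<in> R)"
proof -
  have "y \<le> undual (arrow_of_rel R a) \<longleftrightarrow> (\<forall>p\<in>atoms_below a. y \<le> Sup (R `` {p}))"
    unfolding arrow_of_rel_def by (simp add: le_INF_iff)
  also have "\<dots> \<longleftrightarrow> (\<forall>p\<in>atoms_below a. \<forall>q\<in>atoms_below y. q \<le> Sup (R `` {p}))"
    using atomistic_le_iff[OF assms(1)] by blast
  also have "\<dots> \<longleftrightarrow> (\<forall>p\<in>atoms_below a. \<forall>q\<in>atoms_below y. (p, q) \<in> R)"
    using bicoatomic_rel_mem_iff[OF assms] by (simp add: atoms_below_def)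
  finally show ?thesis .
qed

lemma arrow_of_rel_galois:
  assumes "atomistic TYPE('a::complete_lattice)" and "atomistic TYPE('b::complete_lattice)"
    and "bicoatomic_rel (R :: ('a \<times> 'b) set)"
  shows "arrow_of_rel R a \<le> y \<longleftrightarrow> a \<le> undual (arrow_of_rel (R\<inverse>) (undual y))"
proof -
  have "arrow_of_rel R a \<le> y \<longleftrightarrow> undual y \<le> undual (arrow_of_rel R a)"
    by (rule dual_less_eq_iff)
  also have "\<dots> \<longleftrightarrow> (\<forall>p\<in>atoms_below a. \<forall>q\<in>atoms_below (undual y). (p, q) \<in> R)"
    by (rule le_arrow_of_rel_iff[OF assms(2,3)])
  also have "\<dots> \<longleftrightarrow> (\<forall>q\<in>atoms_below (undual y). \<forall>p\<in>atoms_below a. (q, p) \<in> R\<inverse>)"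
    by blast
  also have "\<dots> \<longleftrightarrow> a \<le> undual (arrow_of_rel (R\<inverse>) (undual y))"
    using assms(3) by (simp add: le_arrow_of_rel_iff[OF assms(1)])
  finally show ?thesis .
qed

lemma rel_of_arrow_of_rel:
  assumes "atomistic TYPE('b::complete_lattice)"
    and "bicoatomic_rel (R :: ('a::complete_lattice \<times> 'b) set)"
  shows "rel_of_arrow (arrow_of_rel R) = R"
proof -
  have row: "atoms_below (undual (arrow_of_rel R p)) = R `` {p}" if "p \<in> atoms" for p
    unfolding arrow_of_rel_atom[OF that] using bicoatomic_rel_row[OF assms that]
    by (rule conjunct1[THEN sym])
  have "rel_of_arrow (arrow_of_rel R) = (\<Union>p\<in>atoms. {p} \<times> R `` {p})"
    unfolding rel_of_arrow_def using row by (intro SUP_cong) simp_all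
  also have "\<dots> = R" using assms(2) unfolding bicoatomic_rel_def by blast
  finally show ?thesis .
qed

lemma cal0sym_arrow_arrow_of_rel:
  assumes "atomistic TYPE('a::complete_lattice)" and "atomistic TYPE('b::complete_lattice)"
    and "bicoatomic_rel (R :: ('a \<times> 'b) set)"
  shows "cal0sym_arrow (arrow_of_rel R)"
  unfolding cal0sym_arrow_def
proof (intro conjI ballI allI)
  note galois = arrow_of_rel_galois[OF assms]
  show "arrow_of_rel R (Sup S) = Sup (arrow_of_rel R ` S)" for S
    using galois by (rule galois_Sup_preserving)
  show "arrow_of_rel R p \<in> atoms \<or> arrow_of_rel R p = bot" if "p \<in> atoms" for p
  proof -
    have "undual (arrow_of_rel R p) \<in> coatoms \<union> {top}"
      unfolding arrow_of_rel_atom[OF that] using bicoatomic_rel_row[OF assms(2,3) that] by blast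
    then show ?thesis using undual_mem_coatoms_top_iff by blast
  qed
  show "radj (arrow_of_rel R) x \<in> coatoms \<or> radj (arrow_of_rel R) x = top" if "x \<in> coatoms" for x
  proof -
    obtain q where q: "x = dual q" "q \<in> atoms"
      using \<open>x \<in> coatoms\<close> by (metis dual_undual dual_mem_coatoms_iff)
    have "bicoatomic_rel (R\<inverse>)" using assms(3) by simp
    then have "Sup (R\<inverse> `` {q}) \<in> coatoms \<union> {top}"
      using bicoatomic_rel_row[OF assms(1) _ q(2)] by blast
    moreover have "radj (arrow_of_rel R) x = Sup (R\<inverse> `` {q})"
      using galois_radj_eq[OF galois] arrow_of_rel_atom[OF q(2)] q(1) by simp
    ultimately show ?thesis by auto
  qed
qed

lemma rel_of_arrow_row: "p \<in> atoms \<Longrightarrow> rel_of_arrow f `` {p} = atoms_below (undual (f p))"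
  unfolding rel_of_arrow_def by auto

lemma bicoatomic_rel_rel_of_arrow:
  assumes "cal0sym_arrow (f :: 'a::complete_lattice \<Rightarrow> 'b::complete_lattice dual)"
  shows "bicoatomic_rel (rel_of_arrow f)"
proof -
  have Sup_pres: "\<forall>S. f (Sup S) = Sup (f ` S)" using assms unfolding cal0sym_arrow_def by blast
  have col: "(rel_of_arrow f)\<inverse> `` {q} = atoms_below (radj f (dual q))" if "q \<in> atoms" for q
  proof -
    have "q \<le> undual (f p) \<longleftrightarrow> p \<le> radj f (dual q)" for p
      using Sup_preserving_le_radj_iff[OF Sup_pres, of p "dual q"] by (simp add: dual_less_eq_iff)
    then show ?thesis using that unfolding rel_of_arrow_def atoms_below_def by auto
  qed
  have row_top: "undual (f p) \<in> coatoms \<union> {top}" if "p \<in> atoms" for p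
    using assms that undual_mem_coatoms_top_iff unfolding cal0sym_arrow_def by blast
  have col_top: "radj f (dual q) \<in> coatoms \<union> {top}" if "q \<in> atoms" for q
  proof -
    have "dual q \<in> coatoms" using that by simp
    then show ?thesis using assms unfolding cal0sym_arrow_def by blast
  qed
  show ?thesis
    unfolding bicoatomic_rel_def
  proof (intro conjI ballI)
    show "rel_of_arrow f \<subseteq> atoms \<times> atoms" unfolding rel_of_arrow_def atoms_below_def by blast
    show "rel_of_arrow f `` {p} \<in> Cl (coatoms \<union> {top})" if "p \<in> atoms" for p
      unfolding rel_of_arrow_row[OF that] Cl_def using row_top[OF that] by (rule imageI)
    show "(rel_of_arrow f)\<inverse> `` {q} \<in> Cl (coatoms \<union> {top})" if "q \<in> atoms" for q
      unfolding col[OF that] Cl_def using col_top[OF that] by (rule imageI)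
  qed
qed

lemma arrow_of_rel_of_arrow:
  assumes "atomistic TYPE('a::complete_lattice)" and "atomistic TYPE('b::complete_lattice)"
    and "cal0sym_arrow (f :: 'a \<Rightarrow> 'b dual)"
  shows "arrow_of_rel (rel_of_arrow f) = f"
proof
  fix a
  have row_Sup: "Sup (rel_of_arrow f `` {p}) = undual (f p)" if "p \<in> atoms" for p
    unfolding rel_of_arrow_row[OF that] by (rule Sup_atoms_below[OF assms(2)])
  have "f a = f (Sup (atoms_below a))" using Sup_atoms_below[OF assms(1)] by simp
  also have "\<dots> = Sup (f ` atoms_below a)" using assms(3) unfolding cal0sym_arrow_def by blast
  also have "\<dots> = dual (INF p\<in>atoms_below a. undual (f p))"
    by (simp add: image_image)
  also have "\<dots> = arrow_of_rel (rel_of_arrow f) a"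
    unfolding arrow_of_rel_def using row_Sup by (simp add: atoms_below_def)
  finally show "arrow_of_rel (rel_of_arrow f) a = f a" by simp
qed

theorem lemma4p4:
  assumes "cal0sym_obj TYPE('a::complete_lattice)"
      and "cal0sym_obj TYPE('b::complete_lattice)"
  shows "\<exists>\<xi> :: ('a \<times> 'b) set \<Rightarrow> 'a \<Rightarrow> 'b dual.
           bij_betw \<xi> (coatoms_tensor \<union> {atoms \<times> atoms}) cal0sym_hom
         \<and> (\<forall>x \<in> coatoms_tensor \<union> {atoms \<times> atoms}.
               x = (\<Union>p\<in>atoms. {p} \<times> atoms_below (undual (\<xi> x p))))"
proof -
  have A: "atomistic TYPE('a)" and B: "atomistic TYPE('b)"
    using assms unfolding cal0sym_obj_def by blast+
  have "bij_betw (arrow_of_rel :: ('a \<times> 'b) set \<Rightarrow> 'a \<Rightarrow> 'b dual)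
          (Collect bicoatomic_rel) cal0sym_hom"
    unfolding cal0sym_hom_def
    by (rule bij_betw_byWitness[where f' = rel_of_arrow])
      (auto simp: rel_of_arrow_of_rel[OF B] arrow_of_rel_of_arrow[OF A B]
        cal0sym_arrow_arrow_of_rel[OF A B] bicoatomic_rel_rel_of_arrow)
  moreover have "x = (\<Union>p\<in>atoms. {p} \<times> atoms_below (undual (arrow_of_rel x p)))"
    if "bicoatomic_rel (x :: ('a \<times> 'b) set)" for x
    using rel_of_arrow_of_rel[OF B that] by (simp add: rel_of_arrow_def)
  ultimately show ?thesis unfolding coatoms_tensor_Un_top_eq[OF A B] by blast
qed

end
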